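(* Let $p, p' > 1$ be real numbers with $\frac{1}{p}+\frac{1}{p'}=1$, let $\mu,\nu$ be probability distributions on $S$ with $\nu(s)>0$ for all $s\in S$, and let $\rho$ be a probability distribution on $\{1,\dots,N\}$. Then for every joint stationary strategy $\boldsymbol{\pi}=(\pi^1,\dots,\pi^N)$ and every tuple of functions $(v^1,\dots,v^N)$ with $v^i:S\to\mathbb{R}$, $$\Big(\sum_{i=1}^N \rho(i)\,\big\|v^{*i}_{\boldsymbol{\pi}^{-i}} - v^i_{\boldsymbol{\pi}}\big\|_{\mu,p}^p\Big)^{1/p} \le \frac{2^{1/p'}\, C_\infty(\mu,\nu)^{1/p}}{1-\gamma}\left[\sum_{i=1}^N \rho(i)\Big(\big\|\mathcal{T}^{*i}_{\boldsymbol{\pi}^{-i}} v^i - v^i\big\|_{\nu,p}^p + \big\|\mathcal{T}^i_{\boldsymbol{\pi}} v^i - v^i\big\|_{\nu,p}^p\Big)\right]^{1/p}.$$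
   Context: An $N$-player Markov game has a finite state space $S$, finite nonempty action sets $A^i(s)$ for each player $i\in\{1,\dots,N\}$ and state $s$, rewards $r^i(s,\mathbf a)\in\mathbb{R}$ for joint actions $\mathbf a=(a^1,\dots,a^N)$, a transition kernel $p(s'|s,\mathbf a)$, and a discount factor $\gamma\in[0,1)$. We write $\mathbf a=(a^i,\mathbf a^{-i})$ where $\mathbf a^{-i}$ is the joint action of all players other than $i$. A stationary strategy $\pi^i$ of player $i$ assigns to each $s$ a probability distribution $\pi^i(\cdot|s)$ on $A^i(s)$; a joint strategy is $\boldsymbol\pi=(\pi^1,\dots,\pi^N)=(\pi^i,\boldsymbol\pi^{-i})$, with actions drawn independently across players. Define $\mathcal P_{\boldsymbol\pi}(s'|s)=E_{\mathbf a\sim\boldsymbol\pi(\cdot|s)}[p(s'|s,\mathbf a)]$, $r^i_{\boldsymbol\pi}(s)=E_{\mathbf a\sim\boldsymbol\pi(\cdot|s)}[r^i(s,\mathbf a)]$, $\mathcal P_{\boldsymbol\pi^{-i}}(s'|s,a^i)=E_{\mathbf a^{-i}\sim\boldsymbol\pi^{-i}(\cdot|s)}[p(s'|s,a^i,\mathbf a^{-i})]$, $r^i_{\boldsymbol\pi^{-i}}(s,a^i)=E_{\mathbf a^{-i}\sim\boldsymbol\pi^{-i}(\cdot|s)}[r^i(s,a^i,\mathbf a^{-i})]$. The value of $\boldsymbol\pi$ for player $i$ is $v^i_{\boldsymbol\pi}=(\mathcal I-\gamma\mathcal P_{\boldsymbol\pi})^{-1}r^i_{\boldsymbol\pi}$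 (vectors/matrices indexed by $S$, $\mathcal I$ the identity). The best-response value is $v^{*i}_{\boldsymbol\pi^{-i}}=\max_{\tilde\pi^i} v^i_{\tilde\pi^i,\boldsymbol\pi^{-i}}$ (pointwise maximum over stationary strategies of player $i$). For $v:S\to\mathbb R$, the Bellman operators are $\mathcal T^i_{\boldsymbol\pi}v(s)=r^i_{\boldsymbol\pi}(s)+\gamma\sum_{s'}\mathcal P_{\boldsymbol\pi}(s'|s)v(s')$ and $\mathcal T^{*i}_{\boldsymbol\pi^{-i}}v(s)=\max_{a^i\in A^i(s)}\big[r^i_{\boldsymbol\pi^{-i}}(s,a^i)+\gamma\sum_{s'}\mathcal P_{\boldsymbol\pi^{-i}}(s'|s,a^i)v(s')\big]$. For a distribution $\mu$ on $S$ and $f:S\to\mathbb R$, $\|f\|_{\mu,p}=(\sum_{s}\mu(s)|f(s)|^p)^{1/p}$. The concentrability coefficient of a joint strategy $\boldsymbol\pi$ is $C_\infty(\mu,\nu,\boldsymbol\pi)=\max_{s\in S}\frac{[(1-\gamma)\mu^T(\mathcal I-\gamma\mathcal P_{\boldsymbol\pi})^{-1}](s)}{\nu(s)}$ (the sup-norm of the Radon–Nikodym derivative of the distribution $(1-\gamma)\mu^T(\mathcal I-\gamma\mathcal P_{\boldsymbol\pi})^{-1}$ with respect to $\nu$), and $C_\infty(\mu,\nu)=\sup_{\boldsymbol\pi}C_\infty(\mu,\nu,\boldsymbol\pi)$, the supremum over all joint stationary strategies. *)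

theory Defs
  imports "HOL-Analysis.Analysis"
begin

text \<open>Players are 1..N; A i s is the action set of player i
 in state s; joint actions are functions nat => 'a (extensional on {1..N});
 K s a s' is the transition kernel p(s'|s,a); r i s a the reward of player i;
 gam the discount factor.\<close>

definition joint_actions :: "nat \<Rightarrow> (nat \<Rightarrow> 's \<Rightarrow> 'a set) \<Rightarrow> 's \<Rightarrow> (nat \<Rightarrow> 'a) set" where
  "joint_actions N A s = PiE {1..N} (\<lambda>i. A i s)"

definition jprob :: "nat \<Rightarrow> (nat \<Rightarrow> 's \<Rightarrow> 'a \<Rightarrow> real) \<Rightarrow> 's \<Rightarrow> (nat \<Rightarrow> 'a) \<Rightarrow> real" where
  "jprob N \<pi> s a = (\<Prod>j\<in>{1..N}. \<pi> j s (a j))"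

definition is_strategy :: "(nat \<Rightarrow> 's \<Rightarrow> 'a set) \<Rightarrow> nat \<Rightarrow> ('s \<Rightarrow> 'a \<Rightarrow> real) \<Rightarrow> bool" where
  "is_strategy A i \<sigma> \<longleftrightarrow> (\<forall>s. (\<forall>a\<in>A i s. 0 \<le> \<sigma> s a) \<and> sum (\<sigma> s) (A i s) = 1)"

definition is_joint_strategy :: "nat \<Rightarrow> (nat \<Rightarrow> 's \<Rightarrow> 'a set) \<Rightarrow> (nat \<Rightarrow> 's \<Rightarrow> 'a \<Rightarrow> real) \<Rightarrow> bool" where
  "is_joint_strategy N A \<pi> \<longleftrightarrow> (\<forall>i\<in>{1..N}. is_strategy A i (\<pi> i))"

definition P_pi :: "nat \<Rightarrow> (nat \<Rightarrow> 's \<Rightarrow> 'a set) \<Rightarrow> ('s \<Rightarrow> (nat \<Rightarrow> 'a) \<Rightarrow> 's \<Rightarrow> real)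
    \<Rightarrow> (nat \<Rightarrow> 's \<Rightarrow> 'a \<Rightarrow> real) \<Rightarrow> 's \<Rightarrow> 's \<Rightarrow> real" where
  "P_pi N A K \<pi> s s' = (\<Sum>a\<in>joint_actions N A s. jprob N \<pi> s a * K s a s')"

definition r_pi :: "nat \<Rightarrow> (nat \<Rightarrow> 's \<Rightarrow> 'a set) \<Rightarrow> (nat \<Rightarrow> 's \<Rightarrow> (nat \<Rightarrow> 'a) \<Rightarrow> real)
    \<Rightarrow> nat \<Rightarrow> (nat \<Rightarrow> 's \<Rightarrow> 'a \<Rightarrow> real) \<Rightarrow> 's \<Rightarrow> real" where
  "r_pi N A r i \<pi> s = (\<Sum>a\<in>joint_actions N A s. jprob N \<pi> s a * r i s a)"

definition P_mi :: "nat \<Rightarrow> (nat \<Rightarrow> 's \<Rightarrow> 'a set) \<Rightarrow> ('s \<Rightarrow> (nat \<Rightarrow> 'a) \<Rightarrow> 's \<Rightarrow> real)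
    \<Rightarrow> nat \<Rightarrow> (nat \<Rightarrow> 's \<Rightarrow> 'a \<Rightarrow> real) \<Rightarrow> 's \<Rightarrow> 'a \<Rightarrow> 's \<Rightarrow> real" where
  "P_mi N A K i \<pi> s ai s' =
     (\<Sum>a\<in>{a\<in>joint_actions N A s. a i = ai}. (\<Prod>j\<in>{1..N}-{i}. \<pi> j s (a j)) * K s a s')"

definition r_mi :: "nat \<Rightarrow> (nat \<Rightarrow> 's \<Rightarrow> 'a set) \<Rightarrow> (nat \<Rightarrow> 's \<Rightarrow> (nat \<Rightarrow> 'a) \<Rightarrow> real)
    \<Rightarrow> nat \<Rightarrow> (nat \<Rightarrow> 's \<Rightarrow> 'a \<Rightarrow> real) \<Rightarrow> 's \<Rightarrow> 'a \<Rightarrow> real" where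
  "r_mi N A r i \<pi> s ai =
     (\<Sum>a\<in>{a\<in>joint_actions N A s. a i = ai}. (\<Prod>j\<in>{1..N}-{i}. \<pi> j s (a j)) * r i s a)"

definition Pmat :: "nat \<Rightarrow> (nat \<Rightarrow> 's::finite \<Rightarrow> 'a set) \<Rightarrow> ('s \<Rightarrow> (nat \<Rightarrow> 'a) \<Rightarrow> 's \<Rightarrow> real)
    \<Rightarrow> (nat \<Rightarrow> 's \<Rightarrow> 'a \<Rightarrow> real) \<Rightarrow> real^'s^'s" where
  "Pmat N A K \<pi> = (\<chi> s s'. P_pi N A K \<pi> s s')"

definition resolvent :: "nat \<Rightarrow> (nat \<Rightarrow> 's::finite \<Rightarrow> 'a set) \<Rightarrow> ('s \<Rightarrow> (nat \<Rightarrow> 'a) \<Rightarrow> 's \<Rightarrow> real)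
    \<Rightarrow> real \<Rightarrow> (nat \<Rightarrow> 's \<Rightarrow> 'a \<Rightarrow> real) \<Rightarrow> real^'s^'s" where
  "resolvent N A K gam \<pi> = matrix_inv (mat 1 - gam *\<^sub>R Pmat N A K \<pi>)"

definition game_value :: "nat \<Rightarrow> (nat \<Rightarrow> 's::finite \<Rightarrow> 'a set) \<Rightarrow> ('s \<Rightarrow> (nat \<Rightarrow> 'a) \<Rightarrow> 's \<Rightarrow> real)
    \<Rightarrow> (nat \<Rightarrow> 's \<Rightarrow> (nat \<Rightarrow> 'a) \<Rightarrow> real) \<Rightarrow> real \<Rightarrow> nat \<Rightarrow> (nat \<Rightarrow> 's \<Rightarrow> 'a \<Rightarrow> real) \<Rightarrow> 's \<Rightarrow> real" where
  "game_value N A K r gam i \<pi> s = (resolvent N A K gam \<pi> *v (\<chi> t. r_pi N A r i \<pi> t)) $ s"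

definition best_value :: "nat \<Rightarrow> (nat \<Rightarrow> 's::finite \<Rightarrow> 'a set) \<Rightarrow> ('s \<Rightarrow> (nat \<Rightarrow> 'a) \<Rightarrow> 's \<Rightarrow> real)
    \<Rightarrow> (nat \<Rightarrow> 's \<Rightarrow> (nat \<Rightarrow> 'a) \<Rightarrow> real) \<Rightarrow> real \<Rightarrow> nat \<Rightarrow> (nat \<Rightarrow> 's \<Rightarrow> 'a \<Rightarrow> real) \<Rightarrow> 's \<Rightarrow> real" where
  "best_value N A K r gam i \<pi> s = (SUP \<sigma>\<in>{\<sigma>. is_strategy A i \<sigma>}. game_value N A K r gam i (\<pi>(i := \<sigma>)) s)"

definition bellman :: "nat \<Rightarrow> (nat \<Rightarrow> 's::finite \<Rightarrow> 'a set) \<Rightarrow> ('s \<Rightarrow> (nat \<Rightarrow> 'a) \<Rightarrow> 's \<Rightarrow> real)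
    \<Rightarrow> (nat \<Rightarrow> 's \<Rightarrow> (nat \<Rightarrow> 'a) \<Rightarrow> real) \<Rightarrow> real \<Rightarrow> nat \<Rightarrow> (nat \<Rightarrow> 's \<Rightarrow> 'a \<Rightarrow> real)
    \<Rightarrow> ('s \<Rightarrow> real) \<Rightarrow> 's \<Rightarrow> real" where
  "bellman N A K r gam i \<pi> v s = r_pi N A r i \<pi> s + gam * (\<Sum>s'\<in>UNIV. P_pi N A K \<pi> s s' * v s')"

definition bellman_opt :: "nat \<Rightarrow> (nat \<Rightarrow> 's::finite \<Rightarrow> 'a set) \<Rightarrow> ('s \<Rightarrow> (nat \<Rightarrow> 'a) \<Rightarrow> 's \<Rightarrow> real)
    \<Rightarrow> (nat \<Rightarrow> 's \<Rightarrow> (nat \<Rightarrow> 'a) \<Rightarrow> real) \<Rightarrow> real \<Rightarrow> nat \<Rightarrow> (nat \<Rightarrow> 's \<Rightarrow> 'a \<Rightarrow> real)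
    \<Rightarrow> ('s \<Rightarrow> real) \<Rightarrow> 's \<Rightarrow> real" where
  "bellman_opt N A K r gam i \<pi> v s =
     Max ((\<lambda>ai. r_mi N A r i \<pi> s ai + gam * (\<Sum>s'\<in>UNIV. P_mi N A K i \<pi> s ai s' * v s')) ` A i s)"

definition wnorm :: "('s::finite \<Rightarrow> real) \<Rightarrow> real \<Rightarrow> ('s \<Rightarrow> real) \<Rightarrow> real" where
  "wnorm \<mu> p f = (\<Sum>s\<in>UNIV. \<mu> s * \<bar>f s\<bar> powr p) powr (1 / p)"

definition is_distribution :: "'x set \<Rightarrow> ('x \<Rightarrow> real) \<Rightarrow> bool" where
  "is_distribution X d \<longleftrightarrow> (\<forall>x\<in>X. 0 \<le> d x) \<and> sum d X = 1"

definition conc_pi :: "nat \<Rightarrow> (nat \<Rightarrow> 's::finite \<Rightarrow> 'a set) \<Rightarrow> ('s \<Rightarrow> (nat \<Rightarrow> 'a) \<Rightarrow> 's \<Rightarrow> real)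
    \<Rightarrow> real \<Rightarrow> ('s \<Rightarrow> real) \<Rightarrow> ('s \<Rightarrow> real) \<Rightarrow> (nat \<Rightarrow> 's \<Rightarrow> 'a \<Rightarrow> real) \<Rightarrow> real" where
  "conc_pi N A K gam \<mu> \<nu> \<pi> =
     Max (range (\<lambda>s. (((1 - gam) *\<^sub>R ((\<chi> t. \<mu> t) v* resolvent N A K gam \<pi>)) $ s) / \<nu> s))"

definition conc :: "nat \<Rightarrow> (nat \<Rightarrow> 's::finite \<Rightarrow> 'a set) \<Rightarrow> ('s \<Rightarrow> (nat \<Rightarrow> 'a) \<Rightarrow> 's \<Rightarrow> real)
    \<Rightarrow> real \<Rightarrow> ('s \<Rightarrow> real) \<Rightarrow> ('s \<Rightarrow> real) \<Rightarrow> real" where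
  "conc N A K gam \<mu> \<nu> = (SUP \<pi>\<in>{\<pi>. is_joint_strategy N A \<pi>}. conc_pi N A K gam \<mu> \<nu> \<pi>)"

end

theory Submission
  imports Defs
begin

text \<open>Fix a player \<open>i\<close>. Her best response to \<open>\<pi>\<^sup>-\<^sup>i\<close> can be taken deterministic, say \<open>d\<close>,
  and both \<open>v\<^sup>*\<^sup>i - v\<close> and \<open>v\<^sup>i\<^sub>\<pi> - v\<close> are obtained by applying a resolvent \<open>(I - \<gamma>P)\<^sup>-\<^sup>1\<close> to a
  Bellman residual; for the best response that residual is dominated by \<open>T\<^sup>*\<^sup>i v - v\<close>.
  Hence \<open>0 \<le> v\<^sup>*\<^sup>i - v\<^sup>i\<^sub>\<pi> \<le> R\<^sub>1 |T\<^sup>*\<^sup>i v - v| + R\<^sub>2 |T\<^sup>i\<^sub>\<pi> v - v|\<close> pointwise.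
  The rows of \<open>(1 - \<gamma>) R\<close> are probability vectors, so Jensen's inequality gives
  \<open>((1 - \<gamma>) R a)\<^sup>p \<le> (1 - \<gamma>) R a\<^sup>p\<close>, and integrating against \<open>\<mu>\<close> replaces \<open>(1 - \<gamma>) \<mu>\<^sup>T R\<close> by
  \<open>C\<^sub>\<infinity>(\<mu>,\<nu>) \<nu>\<close>. Together with \<open>(x + y)\<^sup>p \<le> 2\<^sup>p\<^sup>-\<^sup>1 (x\<^sup>p + y\<^sup>p)\<close> and averaging over \<open>\<rho>\<close>
  this yields the claim, since \<open>(2\<^sup>p\<^sup>-\<^sup>1)\<^sup>1\<^sup>/\<^sup>p = 2\<^sup>1\<^sup>/\<^sup>p\<^sup>'\<close>.\<close>

lemma convex_on_powr_nonneg: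
  fixes p :: real
  assumes p: "p \<ge> 1"
  shows "convex_on {0..} (\<lambda>x. x powr p)"
proof (rule convex_onI)
  have powr_le_self: "c powr p \<le> c" if "0 \<le> c" "c \<le> 1" for c :: real
    using that p powr_mono'[of 1 p c] by (cases "c = 0") auto
  fix t x y :: real
  assume t: "0 < t" "t < 1" and xy: "x \<in> {0..}" "y \<in> {0..}"
  show "((1 - t) *\<^sub>R x + t *\<^sub>R y) powr p \<le> (1 - t) * x powr p + t * y powr p"
  proof (cases "x = 0 \<or> y = 0")
    case True
    then show ?thesis
    proof
      assume "x = 0"
      have "(t * y) powr p = t powr p * y powr p" using t xy by (simp add: powr_mult)
      also have "\<dots> \<le> t * y powr p" using powr_le_self[of t] t by (intro mult_right_mono) auto
      finally show ?thesis using \<open>x = 0\<close> by simp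
    next
      assume "y = 0"
      have "((1 - t) * x) powr p = (1 - t) powr p * x powr p" using t xy by (simp add: powr_mult)
      also have "\<dots> \<le> (1 - t) * x powr p" using powr_le_self[of "1 - t"] t by (intro mult_right_mono) auto
      finally show ?thesis using \<open>y = 0\<close> by simp
    qed
  next
    case False
    then have "x \<in> {0<..}" "y \<in> {0<..}" using xy by auto
    with convex_onD[OF powr_convex[OF p], of t x y] t show ?thesis by simp
  qed
qed (simp add: convex_real_interval)

lemma powr_add_le_two_powr:
  fixes x y p :: real
  assumes p: "p \<ge> 1" and "0 \<le> x" "0 \<le> y"
  shows "(x + y) powr p \<le> 2 powr (p - 1) * (x powr p + y powr p)"
proof -
  have "((1 - 1/2) *\<^sub>R x + (1/2) *\<^sub>R y) powr p \<le> (1 - 1/2) * x powr p + (1/2) * y powr p"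
    using assms by (intro convex_onD[OF convex_on_powr_nonneg[OF p]]) auto
  then have mid: "((x + y) / 2) powr p \<le> (x powr p + y powr p) / 2"
    by (simp add: field_simps)
  have "x + y = 2 * ((x + y) / 2)" by simp
  then have "(x + y) powr p = 2 powr p * ((x + y) / 2) powr p"
    using assms by (metis powr_mult zero_le_numeral add_nonneg_nonneg divide_nonneg_pos zero_less_numeral)
  also have "\<dots> \<le> 2 powr p * ((x powr p + y powr p) / 2)"
    using mid by (intro mult_left_mono) auto
  also have "2 powr p = 2 * 2 powr (p - 1)" by (simp add: powr_diff)
  finally show ?thesis by simp
qed

lemma sum_powr_le_two_powr_sum:
  fixes x y z \<mu> :: "'s::finite \<Rightarrow> real"
  assumes p: "p \<ge> 1" and \<mu>: "\<And>s. 0 \<le> \<mu> s"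
    and y: "\<And>s. 0 \<le> y s" and z: "\<And>s. 0 \<le> z s"
    and x: "\<And>s. 0 \<le> x s" "\<And>s. x s \<le> y s + z s"
  shows "(\<Sum>s\<in>UNIV. \<mu> s * x s powr p)
    \<le> 2 powr (p - 1) * ((\<Sum>s\<in>UNIV. \<mu> s * y s powr p) + (\<Sum>s\<in>UNIV. \<mu> s * z s powr p))"
proof -
  have "(\<Sum>s\<in>UNIV. \<mu> s * x s powr p) \<le> (\<Sum>s\<in>UNIV. \<mu> s * (2 powr (p - 1) * (y s powr p + z s powr p)))"
  proof (intro sum_mono mult_left_mono \<mu>)
    fix s
    have "x s powr p \<le> (y s + z s) powr p" using x p by (intro powr_mono2) auto
    also have "\<dots> \<le> 2 powr (p - 1) * (y s powr p + z s powr p)"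
      by (intro powr_add_le_two_powr p y z)
    finally show "x s powr p \<le> \<dots>" .
  qed
  then show ?thesis by (simp add: sum_distrib_left sum.distrib algebra_simps)
qed

lemma conjugate_exponent_constant:
  fixes p p' c :: real
  assumes p: "p > 1" "1 / p + 1 / p' = 1" and "0 \<le> C" "c > 0"
  shows "(2 powr (p - 1) * C / c powr p) powr (1 / p) = 2 powr (1 / p') * C powr (1 / p) / c"
proof -
  have "(p - 1) * (1 / p) = 1 / p'" using p by (simp add: field_simps)
  then have "(2 powr (p - 1)) powr (1 / p) = 2 powr (1 / p')" by (simp add: powr_powr)
  moreover have "(c powr p) powr (1 / p) = c" using assms by (simp add: powr_powr)
  ultimately show ?thesis using assms by (simp add: powr_mult powr_divide)
qed

lemma weighted_sum_powr_root_le: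
  fixes L W \<rho> :: "'i \<Rightarrow> real"
  assumes "p > 0" "0 \<le> k" and "\<And>i. i \<in> I \<Longrightarrow> 0 \<le> \<rho> i"
    and "\<And>i. i \<in> I \<Longrightarrow> 0 \<le> L i" "\<And>i. i \<in> I \<Longrightarrow> 0 \<le> W i"
    and LW: "\<And>i. i \<in> I \<Longrightarrow> L i \<le> k * W i"
  shows "(\<Sum>i\<in>I. \<rho> i * L i) powr (1 / p) \<le> k powr (1 / p) * (\<Sum>i\<in>I. \<rho> i * W i) powr (1 / p)"
proof -
  have "(\<Sum>i\<in>I. \<rho> i * L i) \<le> (\<Sum>i\<in>I. \<rho> i * (k * W i))"
    using assms by (intro sum_mono mult_left_mono) auto
  also have "\<dots> = k * (\<Sum>i\<in>I. \<rho> i * W i)" by (simp add: sum_distrib_left mult_ac)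
  finally have "(\<Sum>i\<in>I. \<rho> i * L i) powr (1 / p) \<le> (k * (\<Sum>i\<in>I. \<rho> i * W i)) powr (1 / p)"
    using assms by (intro powr_mono2 sum_nonneg mult_nonneg_nonneg) auto
  also have "\<dots> = k powr (1 / p) * (\<Sum>i\<in>I. \<rho> i * W i) powr (1 / p)"
    using assms by (simp add: powr_mult sum_nonneg)
  finally show ?thesis .
qed

section \<open>Resolvents of discounted stochastic matrices\<close>

locale discounted_stochastic =
  fixes P :: "real^'n::finite^'n" and g :: real
  assumes nonneg: "\<And>s t. 0 \<le> P$s$t" and row_sum: "\<And>s. (\<Sum>t\<in>UNIV. P$s$t) = 1"
    and discount: "0 \<le> g" "g < 1"
begin

definition "M = mat 1 - g *\<^sub>R P"
definition "R = matrix_inv M"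

lemma M_vec_nth: "(M *v x)$s = x$s - g * (\<Sum>t\<in>UNIV. P$s$t * x$t)"
proof -
  have "(M *v x)$s = (\<Sum>t\<in>UNIV. ((if s = t then 1 else 0) - g * P$s$t) * x$t)"
    by (simp add: M_def matrix_vector_mult_def mat_def)
  also have "\<dots> = (\<Sum>t\<in>UNIV. (if s = t then x$t else 0) - g * (P$s$t * x$t))"
    by (intro sum.cong) (auto simp: algebra_simps)
  also have "\<dots> = x$s - g * (\<Sum>t\<in>UNIV. P$s$t * x$t)"
    by (simp add: sum_subtractf sum_distrib_left)
  finally show ?thesis .
qed

lemma row_average_le: "(\<And>t. x$t \<le> m) \<Longrightarrow> (\<Sum>t\<in>UNIV. P$s$t * x$t) \<le> m"
  using sum_mono[of UNIV "\<lambda>t. P$s$t * x$t" "\<lambda>t. P$s$t * m"]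
  by (simp add: mult_left_mono nonneg sum_distrib_right[symmetric] row_sum)

lemma row_average_ge: "(\<And>t. m \<le> x$t) \<Longrightarrow> m \<le> (\<Sum>t\<in>UNIV. P$s$t * x$t)"
  using sum_mono[of UNIV "\<lambda>t. P$s$t * m" "\<lambda>t. P$s$t * x$t"]
  by (simp add: mult_left_mono nonneg sum_distrib_right[symmetric] row_sum)

text \<open>A maximum-modulus argument: at a state where \<open>|x|\<close> is maximal, \<open>x = gPx\<close> forces
  \<open>max |x| \<le> g max |x|\<close>.\<close>
lemma M_vec_eq_0: assumes "M *v x = 0" shows "x = 0"
proof -
  define m where "m = Max (range (\<lambda>t. \<bar>x$t\<bar>))"
  have le_m: "\<And>t. \<bar>x$t\<bar> \<le> m" unfolding m_def by (intro Max_ge) auto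
  have "m \<in> range (\<lambda>t. \<bar>x$t\<bar>)" unfolding m_def by (intro Max_in) auto
  then obtain s where s: "\<bar>x$s\<bar> = m" by auto
  have "x$s = g * (\<Sum>t\<in>UNIV. P$s$t * x$t)" using M_vec_nth[of x s] assms by simp
  then have "m = g * \<bar>\<Sum>t\<in>UNIV. P$s$t * x$t\<bar>" using s discount by (simp add: abs_mult)
  also have "\<dots> \<le> g * m"
  proof (intro mult_left_mono)
    have "(\<Sum>t\<in>UNIV. P$s$t * x$t) \<le> m"
      using le_m by (intro row_average_le) (metis abs_ge_self order_trans)
    moreover have "-m \<le> (\<Sum>t\<in>UNIV. P$s$t * x$t)"
      using le_m by (intro row_average_ge) (metis abs_le_iff minus_le_iff)
    ultimately show "\<bar>\<Sum>t\<in>UNIV. P$s$t * x$t\<bar> \<le> m" by simp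
  qed (use discount in simp)
  finally have "(1 - g) * m \<le> 0" by (simp add: algebra_simps)
  then have "m \<le> 0" using discount by (simp add: mult_le_0_iff)
  then show ?thesis using le_m by (metis abs_le_zero_iff order_trans vec_eq_iff zero_index)
qed

lemma R_M: "R ** M = mat 1" and M_R: "M ** R = mat 1"
proof -
  have "invertible M"
    unfolding invertible_left_inverse matrix_left_invertible_ker using M_vec_eq_0 by blast
  then have "M ** R = mat 1 \<and> R ** M = mat 1"
    unfolding R_def matrix_inv_def invertible_def by (rule someI_ex)
  then show "R ** M = mat 1" "M ** R = mat 1" by auto
qed

lemma M_R_vec: "M *v (R *v y) = y" by (simp add: matrix_vector_mul_assoc M_R)
lemma R_M_vec: "R *v (M *v y) = y" by (simp add: matrix_vector_mul_assoc R_M)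

lemma R_vec_nth: "(R *v y)$s = (\<Sum>t\<in>UNIV. R$s$t * y$t)"
  by (simp add: matrix_vector_mult_def)

lemma R_vec_fixpoint: "(R *v y)$s = y$s + g * (\<Sum>t\<in>UNIV. P$s$t * (R *v y)$t)"
  using M_vec_nth[of "R *v y" s] M_R_vec[of y] by simp

lemma R_vec_nonneg: assumes "\<And>t. 0 \<le> y$t" shows "0 \<le> (R *v y)$s"
proof -
  define m where "m = Min (range (\<lambda>t. (R *v y)$t))"
  have m_le: "\<And>t. m \<le> (R *v y)$t" unfolding m_def by (intro Min_le) auto
  have "m \<in> range (\<lambda>t. (R *v y)$t)" unfolding m_def by (intro Min_in) auto
  then obtain s0 where s0: "(R *v y)$s0 = m" by auto
  have "g * m \<le> g * (\<Sum>t\<in>UNIV. P$s0$t * (R *v y)$t)"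
    using row_average_ge[OF m_le] discount by (intro mult_left_mono) auto
  then have "g * m \<le> m" using R_vec_fixpoint[of y s0] assms[of s0] s0 by linarith
  then have "0 \<le> (1 - g) * m" by (simp add: algebra_simps)
  then have "0 \<le> m" using discount by (simp add: zero_le_mult_iff)
  then show ?thesis using m_le order_trans by blast
qed

lemma R_vec_ge: assumes "\<And>t. 0 \<le> y$t" shows "y$s \<le> (R *v y)$s"
proof -
  have "0 \<le> (\<Sum>t\<in>UNIV. P$s$t * (R *v y)$t)"
    using R_vec_nonneg[OF assms] nonneg by (intro sum_nonneg mult_nonneg_nonneg) auto
  then have "0 \<le> g * (\<Sum>t\<in>UNIV. P$s$t * (R *v y)$t)" using discount by simp
  then show ?thesis using R_vec_fixpoint[of y s] by linarith
qed

lemma R_vec_mono: assumes "\<And>t. y$t \<le> z$t" shows "(R *v y)$s \<le> (R *v z)$s"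
  using R_vec_nonneg[of "z - y" s] assms by (simp add: matrix_vector_mult_diff_distrib)

lemma R_nonneg: "0 \<le> R$s$t"
proof -
  have "0 \<le> (R *v axis t 1)$s" by (intro R_vec_nonneg) (simp add: axis_def)
  then show ?thesis by (simp add: R_vec_nth axis_def if_distrib cong: if_cong)
qed

lemma R_row_sum: "(\<Sum>t\<in>UNIV. R$s$t) = 1 / (1 - g)"
proof -
  have "M *v (\<chi> t. 1) = (\<chi> t. 1 - g)" by (simp add: vec_eq_iff M_vec_nth row_sum)
  then have "(R *v (\<chi> t. 1 - g))$s = 1" by (metis R_M_vec vec_lambda_beta)
  then have "(\<Sum>t\<in>UNIV. R$s$t) * (1 - g) = 1" by (simp add: R_vec_nth sum_distrib_right)
  then show ?thesis using discount by (simp add: field_simps)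
qed

lemma R_vec_minus: "R *v r - w = R *v (r + g *\<^sub>R (P *v w) - w)"
proof -
  have "M *v w = w - g *\<^sub>R (P *v w)"
    by (subst vec_eq_iff, intro allI)
      (simp only: M_vec_nth vector_minus_component vector_scaleR_component,
       simp add: matrix_vector_mult_def)
  then have "r + g *\<^sub>R (P *v w) - w = r - M *v w" by simp
  then have "R *v (r + g *\<^sub>R (P *v w) - w) = R *v r - R *v (M *v w)"
    by (simp only: matrix_vector_mult_diff_distrib)
  then show ?thesis by (simp add: R_M_vec)
qed

lemma R_vec_powr_le:
  assumes p: "p \<ge> 1" and a: "\<And>t. 0 \<le> a$t"
  shows "((1 - g) * (R *v a)$s) powr p \<le> (1 - g) * (R *v (\<chi> t. a$t powr p))$s"
proof -
  define w where "w t = (1 - g) * R$s$t" for t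
  have "(\<Sum>t\<in>UNIV. w t) = 1" using R_row_sum[of s] discount
    by (simp add: w_def sum_distrib_left[symmetric])
  moreover have "\<And>t. 0 \<le> w t" using R_nonneg discount by (simp add: w_def)
  ultimately have "(\<Sum>t\<in>UNIV. w t *\<^sub>R a$t) powr p \<le> (\<Sum>t\<in>UNIV. w t * a$t powr p)"
    using a by (intro convex_on_sum[OF _ _ convex_on_powr_nonneg[OF p]]) auto
  then show ?thesis by (simp add: w_def R_vec_nth sum_distrib_left mult.assoc)
qed

text \<open>Concentrability: \<open>C\<close> bounds the density of the discounted occupancy measure
  \<open>(1 - g) \<mu>\<^sup>T R\<close> with respect to \<open>\<nu>\<close>.\<close>
lemma R_vec_powr_integral_le:
  assumes p: "p \<ge> 1" and a: "\<And>t. 0 \<le> a$t" and \<mu>: "\<And>s. 0 \<le> \<mu> s"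
    and C: "\<And>t. (1 - g) * (\<Sum>s\<in>UNIV. \<mu> s * R$s$t) \<le> C * \<nu> t"
  shows "(\<Sum>s\<in>UNIV. \<mu> s * ((R *v a)$s) powr p) \<le> C / (1 - g) powr p * (\<Sum>t\<in>UNIV. \<nu> t * a$t powr p)"
proof -
  have "(1 - g) powr p * (\<Sum>s\<in>UNIV. \<mu> s * ((R *v a)$s) powr p)
      = (\<Sum>s\<in>UNIV. \<mu> s * ((1 - g) * (R *v a)$s) powr p)"
    using discount R_vec_nonneg[OF a] by (simp add: sum_distrib_left powr_mult mult_ac)
  also have "\<dots> \<le> (\<Sum>s\<in>UNIV. \<mu> s * ((1 - g) * (R *v (\<chi> t. a$t powr p))$s))"
    by (intro sum_mono mult_left_mono R_vec_powr_le p a \<mu>)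
  also have "\<dots> = (1 - g) * (\<Sum>s\<in>UNIV. \<Sum>t\<in>UNIV. \<mu> s * R$s$t * a$t powr p)"
    by (simp add: R_vec_nth sum_distrib_left mult_ac)
  also have "\<dots> = (\<Sum>t\<in>UNIV. ((1 - g) * (\<Sum>s\<in>UNIV. \<mu> s * R$s$t)) * a$t powr p)"
    by (subst sum.swap) (simp add: sum_distrib_left sum_distrib_right mult_ac)
  also have "\<dots> \<le> (\<Sum>t\<in>UNIV. C * \<nu> t * a$t powr p)"
    by (intro sum_mono mult_right_mono C) simp
  finally have "(1 - g) powr p * (\<Sum>s\<in>UNIV. \<mu> s * ((R *v a)$s) powr p)
      \<le> C * (\<Sum>t\<in>UNIV. \<nu> t * a$t powr p)"
    by (simp add: sum_distrib_left mult_ac)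
  moreover have "0 < (1 - g) powr p" using discount by simp
  ultimately show ?thesis by (simp add: pos_le_divide_eq mult_ac)
qed

end

section \<open>Markov games\<close>

locale game =
  fixes N :: nat and A :: "nat \<Rightarrow> 's::finite \<Rightarrow> 'a set" and K :: "'s \<Rightarrow> (nat \<Rightarrow> 'a) \<Rightarrow> 's \<Rightarrow> real"
    and r :: "nat \<Rightarrow> 's \<Rightarrow> (nat \<Rightarrow> 'a) \<Rightarrow> real" and gam :: real
  assumes actions: "\<forall>i\<in>{1..N}. \<forall>s. finite (A i s) \<and> A i s \<noteq> {}"
    and kernel: "\<forall>s. \<forall>a\<in>joint_actions N A s. (\<forall>s'. 0 \<le> K s a s') \<and> (\<Sum>s'\<in>UNIV. K s a s') = 1"
    and discount: "0 \<le> gam" "gam < 1"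
begin

lemma finite_actions: "i \<in> {1..N} \<Longrightarrow> finite (A i s)"
  using actions by auto

lemma actions_nonempty: "i \<in> {1..N} \<Longrightarrow> A i s \<noteq> {}"
  using actions by auto

lemma finite_joint_actions: "finite (joint_actions N A s)"
  unfolding joint_actions_def using finite_actions by (intro finite_PiE) auto

lemma jprob_nonneg:
  assumes "is_joint_strategy N A \<pi>" "a \<in> joint_actions N A s"
  shows "0 \<le> jprob N \<pi> s a"
  unfolding jprob_def
proof (intro prod_nonneg)
  fix j assume j: "j \<in> {1..N}"
  then have "a j \<in> A j s" using assms(2) unfolding joint_actions_def by (auto simp: PiE_iff)
  then show "0 \<le> \<pi> j s (a j)" using assms(1) j unfolding is_joint_strategy_def is_strategy_def by blast
qed

lemma sum_jprob:
  assumes "is_joint_strategy N A \<pi>"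
  shows "(\<Sum>a\<in>joint_actions N A s. jprob N \<pi> s a) = 1"
proof -
  have "(\<Sum>a\<in>joint_actions N A s. jprob N \<pi> s a) = (\<Prod>j\<in>{1..N}. \<Sum>x\<in>A j s. \<pi> j s x)"
    unfolding joint_actions_def jprob_def using finite_actions by (subst prod_sum_PiE) auto
  also have "\<dots> = (\<Prod>j\<in>{1..N}. 1)"
    using assms unfolding is_joint_strategy_def is_strategy_def by (intro prod.cong) auto
  finally show ?thesis by simp
qed

lemma discounted_stochastic_Pmat:
  assumes "is_joint_strategy N A \<pi>"
  shows "discounted_stochastic (Pmat N A K \<pi>) gam"
proof
  fix s t
  show "0 \<le> Pmat N A K \<pi> $ s $ t"
    unfolding Pmat_def P_pi_def using jprob_nonneg[OF assms] kernel
    by (auto intro!: sum_nonneg mult_nonneg_nonneg)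
next
  fix s
  have "(\<Sum>t\<in>UNIV. Pmat N A K \<pi> $ s $ t) = (\<Sum>a\<in>joint_actions N A s. \<Sum>t\<in>UNIV. jprob N \<pi> s a * K s a t)"
    unfolding Pmat_def P_pi_def by (simp add: sum.swap[of _ UNIV])
  also have "\<dots> = (\<Sum>a\<in>joint_actions N A s. jprob N \<pi> s a)"
    using kernel by (intro sum.cong) (auto simp: sum_distrib_left[symmetric])
  finally show "(\<Sum>t\<in>UNIV. Pmat N A K \<pi> $ s $ t) = 1" using sum_jprob[OF assms] by simp
qed (use discount in auto)

lemma resolvent_eq_R:
  "is_joint_strategy N A \<pi> \<Longrightarrow> resolvent N A K gam \<pi> = discounted_stochastic.R (Pmat N A K \<pi>) gam"
  by (simp add: resolvent_def discounted_stochastic.R_def[OF discounted_stochastic_Pmat]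
      discounted_stochastic.M_def[OF discounted_stochastic_Pmat])

lemma bellman_eq:
  "bellman N A K r gam i \<pi> w s = ((\<chi> t. r_pi N A r i \<pi> t) + gam *\<^sub>R (Pmat N A K \<pi> *v (\<chi> t. w t)))$s"
  by (simp add: bellman_def Pmat_def matrix_vector_mult_def)

lemma game_value_minus:
  assumes "is_joint_strategy N A \<pi>"
  shows "game_value N A K r gam i \<pi> s - w s
    = (resolvent N A K gam \<pi> *v (\<chi> t. bellman N A K r gam i \<pi> w t - w t))$s"
proof -
  interpret discounted_stochastic "Pmat N A K \<pi>" gam by (rule discounted_stochastic_Pmat[OF assms])
  have "(\<chi> t. bellman N A K r gam i \<pi> w t - w t)
      = (\<chi> t. r_pi N A r i \<pi> t) + gam *\<^sub>R (Pmat N A K \<pi> *v (\<chi> t. w t)) - (\<chi> t. w t)"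
    by (simp add: vec_eq_iff bellman_eq)
  then show ?thesis by (simp add: R_vec_minus[symmetric] game_value_def resolvent_eq_R[OF assms])
qed

lemma bellman_game_value:
  assumes "is_joint_strategy N A \<pi>"
  shows "bellman N A K r gam i \<pi> (game_value N A K r gam i \<pi>) s = game_value N A K r gam i \<pi> s"
proof -
  interpret discounted_stochastic "Pmat N A K \<pi>" gam by (rule discounted_stochastic_Pmat[OF assms])
  define e where "e = (\<chi> t. bellman N A K r gam i \<pi> (game_value N A K r gam i \<pi>) t - game_value N A K r gam i \<pi> t)"
  have "R *v e = 0"
    using game_value_minus[OF assms, where i = i and w = "game_value N A K r gam i \<pi>"]
    by (simp add: vec_eq_iff e_def resolvent_eq_R[OF assms])
  then have "e = 0" using M_R_vec[of e] by simp
  then show ?thesis by (simp add: e_def vec_eq_iff)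
qed

lemma game_value_minus_le:
  assumes "is_joint_strategy N A \<pi>" and "\<And>t. bellman N A K r gam i \<pi> w t - w t \<le> e t"
  shows "game_value N A K r gam i \<pi> s - w s \<le> (resolvent N A K gam \<pi> *v (\<chi> t. e t))$s"
proof -
  interpret discounted_stochastic "Pmat N A K \<pi>" gam by (rule discounted_stochastic_Pmat[OF assms(1)])
  show ?thesis
    unfolding game_value_minus[OF assms(1)] resolvent_eq_R[OF assms(1)]
    using assms(2) by (intro R_vec_mono) simp
qed

lemma game_value_minus_ge:
  assumes "is_joint_strategy N A \<pi>" and "\<And>t. e t \<le> bellman N A K r gam i \<pi> w t - w t"
  shows "(resolvent N A K gam \<pi> *v (\<chi> t. e t))$s \<le> game_value N A K r gam i \<pi> s - w s"
proof -
  interpret discounted_stochastic "Pmat N A K \<pi>" gam by (rule discounted_stochastic_Pmat[OF assms(1)])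
  show ?thesis
    unfolding game_value_minus[OF assms(1)] resolvent_eq_R[OF assms(1)]
    using assms(2) by (intro R_vec_mono) simp
qed

lemma sum_joint_actions_fun_upd:
  assumes i: "i \<in> {1..N}"
  shows "(\<Sum>a\<in>joint_actions N A s. jprob N (\<pi>(i := \<sigma>)) s a * f a)
    = (\<Sum>ai\<in>A i s. \<sigma> s ai * (\<Sum>a\<in>{a\<in>joint_actions N A s. a i = ai}. (\<Prod>j\<in>{1..N}-{i}. \<pi> j s (a j)) * f a))"
proof -
  have jprob_upd: "jprob N (\<pi>(i := \<sigma>)) s a = \<sigma> s (a i) * (\<Prod>j\<in>{1..N}-{i}. \<pi> j s (a j))" for a
    unfolding jprob_def using i by (simp add: prod.remove[of _ i])
  have "(\<lambda>a. a i) ` joint_actions N A s \<subseteq> A i s"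
    using i unfolding joint_actions_def by (auto simp: PiE_iff)
  then have "(\<Sum>a\<in>joint_actions N A s. jprob N (\<pi>(i := \<sigma>)) s a * f a)
     = (\<Sum>ai\<in>A i s. \<Sum>a\<in>{a\<in>joint_actions N A s. a i = ai}. jprob N (\<pi>(i := \<sigma>)) s a * f a)"
    by (rule sum.group[symmetric, OF finite_joint_actions finite_actions[OF i]])
  also have "\<dots> = (\<Sum>ai\<in>A i s. \<sigma> s ai * (\<Sum>a\<in>{a\<in>joint_actions N A s. a i = ai}. (\<Prod>j\<in>{1..N}-{i}. \<pi> j s (a j)) * f a))"
    by (intro sum.cong refl) (auto simp: jprob_upd sum_distrib_left mult.assoc intro!: sum.cong)
  finally show ?thesis .
qed

end

section \<open>Best responses of a single player\<close>

locale player = game N A K r gam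
  for N :: nat and A :: "nat \<Rightarrow> 's::finite \<Rightarrow> 'a set" and K r gam +
  fixes i :: nat and \<pi> :: "nat \<Rightarrow> 's \<Rightarrow> 'a \<Rightarrow> real"
  assumes player: "i \<in> {1..N}" and joint_strategy: "is_joint_strategy N A \<pi>"
begin

definition "action_value w s ai = r_mi N A r i \<pi> s ai + gam * (\<Sum>s'\<in>UNIV. P_mi N A K i \<pi> s ai s' * w s')"

definition "deviation_value \<sigma> = game_value N A K r gam i (\<pi>(i := \<sigma>))"

definition "det_strategy d = (\<lambda>s a. if a = d s then 1 else 0 :: real)"

definition "det_choices = {d. \<forall>s. d s \<in> A i s}"

lemma bellman_opt_eq_Max: "bellman_opt N A K r gam i \<pi> w s = Max (action_value w s ` A i s)"
  by (simp add: bellman_opt_def action_value_def)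

lemma bellman_fun_upd:
  "bellman N A K r gam i (\<pi>(i := \<sigma>)) w s = (\<Sum>ai\<in>A i s. \<sigma> s ai * action_value w s ai)"
proof -
  have r: "r_pi N A r i (\<pi>(i := \<sigma>)) s = (\<Sum>ai\<in>A i s. \<sigma> s ai * r_mi N A r i \<pi> s ai)"
    unfolding r_pi_def r_mi_def by (rule sum_joint_actions_fun_upd[OF player])
  have "P_pi N A K (\<pi>(i := \<sigma>)) s s' = (\<Sum>ai\<in>A i s. \<sigma> s ai * P_mi N A K i \<pi> s ai s')" for s'
    unfolding P_pi_def P_mi_def by (rule sum_joint_actions_fun_upd[OF player])
  then have "(\<Sum>s'\<in>UNIV. P_pi N A K (\<pi>(i := \<sigma>)) s s' * w s')
      = (\<Sum>ai\<in>A i s. \<sigma> s ai * (\<Sum>s'\<in>UNIV. P_mi N A K i \<pi> s ai s' * w s'))"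
    by (simp add: sum_distrib_left sum_distrib_right mult.assoc sum.swap[of _ UNIV])
  then show ?thesis
    unfolding bellman_def r action_value_def
    by (simp add: sum.distrib sum_distrib_left algebra_simps)
qed

lemma is_joint_strategy_fun_upd: "is_strategy A i \<sigma> \<Longrightarrow> is_joint_strategy N A (\<pi>(i := \<sigma>))"
  using joint_strategy unfolding is_joint_strategy_def by auto

lemma bellman_le_bellman_opt:
  assumes "is_strategy A i \<sigma>"
  shows "bellman N A K r gam i (\<pi>(i := \<sigma>)) w s \<le> bellman_opt N A K r gam i \<pi> w s"
proof -
  have "(\<Sum>ai\<in>A i s. \<sigma> s ai * action_value w s ai) \<le> (\<Sum>ai\<in>A i s. \<sigma> s ai * Max (action_value w s ` A i s))"
    using assms finite_actions[OF player] unfolding is_strategy_def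
    by (intro sum_mono mult_left_mono Max_ge) auto
  also have "\<dots> = Max (action_value w s ` A i s)"
    using assms unfolding is_strategy_def by (simp add: sum_distrib_right[symmetric])
  finally show ?thesis by (simp add: bellman_fun_upd bellman_opt_eq_Max)
qed

lemma is_strategy_det_strategy: "d \<in> det_choices \<Longrightarrow> is_strategy A i (det_strategy d)"
  unfolding is_strategy_def det_strategy_def det_choices_def using finite_actions[OF player] by auto

lemma bellman_det_strategy:
  assumes "d \<in> det_choices"
  shows "bellman N A K r gam i (\<pi>(i := det_strategy d)) w s = action_value w s (d s)"
proof -
  have "(\<Sum>ai\<in>A i s. det_strategy d s ai * action_value w s ai) = (\<Sum>ai\<in>A i s. if d s = ai then action_value w s ai else 0)"
    unfolding det_strategy_def by (intro sum.cong) auto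
  also have "\<dots> = action_value w s (d s)"
    using assms finite_actions[OF player] unfolding det_choices_def by simp
  finally show ?thesis by (simp add: bellman_fun_upd)
qed

lemma finite_det_choices: "finite det_choices"
proof -
  have "det_choices = PiE UNIV (A i)" unfolding det_choices_def by (auto simp: PiE_def Pi_def)
  then show ?thesis using finite_actions[OF player] by (simp add: finite_PiE)
qed

lemma greedy_det_choice: "\<exists>d\<in>det_choices. \<forall>s. bellman_opt N A K r gam i \<pi> w s = action_value w s (d s)"
proof -
  have "\<exists>a\<in>A i s. action_value w s a = Max (action_value w s ` A i s)" for s
    using Max_in[of "action_value w s ` A i s"] finite_actions[OF player] actions_nonempty[OF player]
    by (metis (no_types, lifting) finite_imageI image_iff image_is_empty)
  then obtain d where "\<forall>s. d s \<in> A i s \<and> action_value w s (d s) = Max (action_value w s ` A i s)"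
    by metis
  then show ?thesis unfolding det_choices_def by (auto simp: bellman_opt_eq_Max)
qed

lemma deviation_value_le:
  assumes w: "\<And>t. bellman_opt N A K r gam i \<pi> w t \<le> w t" and \<sigma>: "is_strategy A i \<sigma>"
  shows "deviation_value \<sigma> s \<le> w s"
proof -
  have "deviation_value \<sigma> s - w s \<le> (resolvent N A K gam (\<pi>(i := \<sigma>)) *v (\<chi> t. 0))$s"
    unfolding deviation_value_def using bellman_le_bellman_opt[OF \<sigma>] w
    by (intro game_value_minus_le[OF is_joint_strategy_fun_upd[OF \<sigma>]]) (meson diff_le_0_iff_le order_trans)
  then show ?thesis by (simp add: matrix_vector_mult_def)
qed

text \<open>Policy improvement: if the greedy policy \<open>d\<close> with respect to \<open>w = v\<^sub>d\<^sub>0\<close> improved on \<open>d0\<close>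
  somewhere, its value would exceed \<open>v\<^sub>d\<^sub>0\<close> by at least the Bellman residual, hence also in total.\<close>
lemma bellman_opt_le_of_max_total:
  assumes d0: "d0 \<in> det_choices"
    and max: "\<And>d. d \<in> det_choices \<Longrightarrow>
      (\<Sum>s\<in>UNIV. deviation_value (det_strategy d) s) \<le> (\<Sum>s\<in>UNIV. deviation_value (det_strategy d0) s)"
  shows "bellman_opt N A K r gam i \<pi> (deviation_value (det_strategy d0)) s \<le> deviation_value (det_strategy d0) s"
proof -
  define w where "w = deviation_value (det_strategy d0)"
  obtain d where d: "d \<in> det_choices" and greedy: "\<And>t. bellman_opt N A K r gam i \<pi> w t = action_value w t (d t)"
    using greedy_det_choice by blast
  define y where "y t = bellman_opt N A K r gam i \<pi> w t - w t" for t
  have js0: "is_joint_strategy N A (\<pi>(i := det_strategy d0))"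
    and js: "is_joint_strategy N A (\<pi>(i := det_strategy d))"
    using is_joint_strategy_fun_upd is_strategy_det_strategy d0 d by blast+
  have y_nonneg: "0 \<le> y t" for t
  proof -
    have "w t = bellman N A K r gam i (\<pi>(i := det_strategy d0)) w t"
      using bellman_game_value[OF js0, of i t] by (simp add: w_def deviation_value_def)
    also have "\<dots> = action_value w t (d0 t)" by (rule bellman_det_strategy[OF d0])
    also have "\<dots> \<le> Max (action_value w t ` A i t)"
      using finite_actions[OF player] d0 unfolding det_choices_def by (intro Max_ge) auto
    finally show ?thesis by (simp add: y_def bellman_opt_eq_Max)
  qed
  interpret discounted_stochastic "Pmat N A K (\<pi>(i := det_strategy d))" gam
    by (rule discounted_stochastic_Pmat[OF js])
  have "y t \<le> deviation_value (det_strategy d) t - w t" for t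
  proof -
    have "y t \<le> (R *v (\<chi> t. y t))$t" using R_vec_ge[of "\<chi> t. y t" t] y_nonneg by simp
    also have "(\<chi> t. y t) = (\<chi> t. bellman N A K r gam i (\<pi>(i := det_strategy d)) w t - w t)"
      by (simp add: y_def greedy bellman_det_strategy[OF d])
    also have "(R *v \<dots>)$t = deviation_value (det_strategy d) t - w t"
      unfolding deviation_value_def by (simp add: game_value_minus[OF js] resolvent_eq_R[OF js])
    finally show ?thesis .
  qed
  then have "(\<Sum>t\<in>UNIV. y t) \<le> (\<Sum>t\<in>UNIV. deviation_value (det_strategy d) t - w t)"
    by (rule sum_mono)
  moreover have "y s \<le> (\<Sum>t\<in>UNIV. y t)" using y_nonneg by (intro member_le_sum) auto
  ultimately have "y s \<le> (\<Sum>t\<in>UNIV. deviation_value (det_strategy d) t - w t)" by linarith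
  also have "\<dots> = (\<Sum>t\<in>UNIV. deviation_value (det_strategy d) t) - (\<Sum>t\<in>UNIV. w t)"
    by (rule sum_subtractf)
  also have "\<dots> \<le> 0" using max[OF d] unfolding w_def by linarith
  finally show ?thesis unfolding y_def w_def by linarith
qed

lemma best_det_response:
  obtains d where "d \<in> det_choices"
    and "\<And>\<sigma> s. is_strategy A i \<sigma> \<Longrightarrow> deviation_value \<sigma> s \<le> deviation_value (det_strategy d) s"
proof -
  define F where "F d = (\<Sum>s\<in>UNIV. deviation_value (det_strategy d) s)" for d
  have "det_choices \<noteq> {}" using greedy_det_choice by blast
  then have "Max (F ` det_choices) \<in> F ` det_choices"
    using finite_det_choices by (intro Max_in) auto
  then obtain d0 where d0: "d0 \<in> det_choices" and F_d0: "F d0 = Max (F ` det_choices)"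
    by auto
  have max: "F d \<le> F d0" if "d \<in> det_choices" for d
    unfolding F_d0 using finite_det_choices that by (intro Max_ge) auto
  show ?thesis
    by (rule that[OF d0 deviation_value_le[OF bellman_opt_le_of_max_total[OF d0 max[unfolded F_def]]]])
qed

lemma best_response_gap_le:
  obtains \<pi>' where "is_joint_strategy N A \<pi>'"
    and "\<And>s. 0 \<le> best_value N A K r gam i \<pi> s - game_value N A K r gam i \<pi> s"
    and "\<And>s. best_value N A K r gam i \<pi> s - game_value N A K r gam i \<pi> s
      \<le> (resolvent N A K gam \<pi>' *v (\<chi> t. \<bar>bellman_opt N A K r gam i \<pi> v t - v t\<bar>))$s
        + (resolvent N A K gam \<pi> *v (\<chi> t. \<bar>bellman N A K r gam i \<pi> v t - v t\<bar>))$s"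
proof -
  obtain d where d: "d \<in> det_choices"
    and best: "\<And>\<sigma> s. is_strategy A i \<sigma> \<Longrightarrow> deviation_value \<sigma> s \<le> deviation_value (det_strategy d) s"
    using best_det_response by blast
  define \<pi>' where "\<pi>' = \<pi>(i := det_strategy d)"
  have js': "is_joint_strategy N A \<pi>'"
    unfolding \<pi>'_def by (rule is_joint_strategy_fun_upd[OF is_strategy_det_strategy[OF d]])
  have own: "is_strategy A i (\<pi> i)" using joint_strategy player unfolding is_joint_strategy_def by blast
  have best_value: "best_value N A K r gam i \<pi> s = game_value N A K r gam i \<pi>' s" for s
    unfolding best_value_def \<pi>'_def
    by (rule cSup_eq_maximum) (use is_strategy_det_strategy[OF d] best in \<open>auto simp: deviation_value_def\<close>)
  show ?thesis
  proof (rule that[OF js'])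
    fix s
    show "0 \<le> best_value N A K r gam i \<pi> s - game_value N A K r gam i \<pi> s"
      using best[OF own, of s] by (simp add: best_value \<pi>'_def deviation_value_def)
    have "game_value N A K r gam i \<pi>' s - v s
        \<le> (resolvent N A K gam \<pi>' *v (\<chi> t. \<bar>bellman_opt N A K r gam i \<pi> v t - v t\<bar>))$s"
      using bellman_le_bellman_opt[OF is_strategy_det_strategy[OF d]]
      by (intro game_value_minus_le[OF js']) (simp add: \<pi>'_def, meson abs_ge_self diff_right_mono order_trans)
    moreover have "(resolvent N A K gam \<pi> *v (\<chi> t. - \<bar>bellman N A K r gam i \<pi> v t - v t\<bar>))$s
        \<le> game_value N A K r gam i \<pi> s - v s"
      by (intro game_value_minus_ge[OF joint_strategy]) simp
    ultimately show "best_value N A K r gam i \<pi> s - game_value N A K r gam i \<pi> s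
      \<le> (resolvent N A K gam \<pi>' *v (\<chi> t. \<bar>bellman_opt N A K r gam i \<pi> v t - v t\<bar>))$s
        + (resolvent N A K gam \<pi> *v (\<chi> t. \<bar>bellman N A K r gam i \<pi> v t - v t\<bar>))$s"
      by (simp add: best_value matrix_vector_mult_def sum_negf)
  qed
qed

lemma best_response_gap_powr_integral_le:
  assumes p: "p \<ge> 1" and \<mu>: "\<And>s. 0 \<le> \<mu> s"
    and C: "\<And>\<pi>' t. is_joint_strategy N A \<pi>' \<Longrightarrow>
        (1 - gam) * (\<Sum>s\<in>UNIV. \<mu> s * resolvent N A K gam \<pi>' $ s $ t) \<le> C * \<nu> t"
  shows "(\<Sum>s\<in>UNIV. \<mu> s * \<bar>best_value N A K r gam i \<pi> s - game_value N A K r gam i \<pi> s\<bar> powr p)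
    \<le> 2 powr (p - 1) * C / (1 - gam) powr p *
      ((\<Sum>t\<in>UNIV. \<nu> t * \<bar>bellman_opt N A K r gam i \<pi> v t - v t\<bar> powr p)
     + (\<Sum>t\<in>UNIV. \<nu> t * \<bar>bellman N A K r gam i \<pi> v t - v t\<bar> powr p))"
proof -
  obtain \<pi>' where js': "is_joint_strategy N A \<pi>'"
    and gap: "\<And>s. 0 \<le> best_value N A K r gam i \<pi> s - game_value N A K r gam i \<pi> s"
      "\<And>s. best_value N A K r gam i \<pi> s - game_value N A K r gam i \<pi> s
        \<le> (resolvent N A K gam \<pi>' *v (\<chi> t. \<bar>bellman_opt N A K r gam i \<pi> v t - v t\<bar>))$s
          + (resolvent N A K gam \<pi> *v (\<chi> t. \<bar>bellman N A K r gam i \<pi> v t - v t\<bar>))$s"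
    using best_response_gap_le by blast
  interpret R1: discounted_stochastic "Pmat N A K \<pi>'" gam by (rule discounted_stochastic_Pmat[OF js'])
  interpret R2: discounted_stochastic "Pmat N A K \<pi>" gam by (rule discounted_stochastic_Pmat[OF joint_strategy])
  define e1 where "e1 = (\<chi> t. \<bar>bellman_opt N A K r gam i \<pi> v t - v t\<bar>)"
  define e2 where "e2 = (\<chi> t. \<bar>bellman N A K r gam i \<pi> v t - v t\<bar>)"
  have "(\<Sum>s\<in>UNIV. \<mu> s * \<bar>best_value N A K r gam i \<pi> s - game_value N A K r gam i \<pi> s\<bar> powr p)
    \<le> 2 powr (p - 1) * ((\<Sum>s\<in>UNIV. \<mu> s * ((R1.R *v e1)$s) powr p) + (\<Sum>s\<in>UNIV. \<mu> s * ((R2.R *v e2)$s) powr p))"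
    using gap by (intro sum_powr_le_two_powr_sum p \<mu> R1.R_vec_nonneg R2.R_vec_nonneg)
      (auto simp: e1_def e2_def resolvent_eq_R[OF js'] resolvent_eq_R[OF joint_strategy])
  also have "\<dots> \<le> 2 powr (p - 1) * (C / (1 - gam) powr p * (\<Sum>t\<in>UNIV. \<nu> t * e1$t powr p)
      + C / (1 - gam) powr p * (\<Sum>t\<in>UNIV. \<nu> t * e2$t powr p))"
  proof (intro mult_left_mono add_mono)
    show "(\<Sum>s\<in>UNIV. \<mu> s * ((R1.R *v e1)$s) powr p) \<le> C / (1 - gam) powr p * (\<Sum>t\<in>UNIV. \<nu> t * e1$t powr p)"
      using C[OF js'] by (intro R1.R_vec_powr_integral_le p \<mu>) (auto simp: e1_def resolvent_eq_R[OF js'])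
    show "(\<Sum>s\<in>UNIV. \<mu> s * ((R2.R *v e2)$s) powr p) \<le> C / (1 - gam) powr p * (\<Sum>t\<in>UNIV. \<nu> t * e2$t powr p)"
      using C[OF joint_strategy] by (intro R2.R_vec_powr_integral_le p \<mu>)
        (auto simp: e2_def resolvent_eq_R[OF joint_strategy])
  qed simp
  finally show ?thesis by (simp add: algebra_simps e1_def e2_def)
qed

end

section \<open>Concentrability and the main theorem\<close>

lemma vector_matrix_mult_nth: "(x v* X) $ t = (\<Sum>s\<in>UNIV. x$s * X$s$t)"
  by (simp add: vector_matrix_mult_def mult.commute)

lemma wnorm_powr:
  assumes "\<And>s. 0 \<le> \<mu> s" "p > 0"
  shows "wnorm \<mu> p f powr p = (\<Sum>s\<in>UNIV. \<mu> s * \<bar>f s\<bar> powr p)"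
  using assms by (simp add: wnorm_def powr_powr sum_nonneg)

context discounted_stochastic
begin

lemma occupancy_nonneg: "(\<And>s. 0 \<le> \<mu> s) \<Longrightarrow> 0 \<le> (1 - g) * (\<Sum>s\<in>UNIV. \<mu> s * R$s$t)"
  using discount R_nonneg by (intro mult_nonneg_nonneg sum_nonneg) auto

lemma occupancy_le_one:
  assumes \<mu>: "is_distribution UNIV \<mu>"
  shows "(1 - g) * (\<Sum>s\<in>UNIV. \<mu> s * R$s$t) \<le> 1"
proof -
  have "(1 - g) * R$s$t \<le> 1" for s
  proof -
    have "R$s$t \<le> (\<Sum>t\<in>UNIV. R$s$t)" using R_nonneg by (intro member_le_sum) auto
    then show ?thesis using R_row_sum[of s] discount by (simp add: field_simps)
  qed
  then have "(\<Sum>s\<in>UNIV. \<mu> s * ((1 - g) * R$s$t)) \<le> (\<Sum>s\<in>UNIV. \<mu> s * 1)"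
    using \<mu> unfolding is_distribution_def by (intro sum_mono mult_left_mono) auto
  then show ?thesis using \<mu> unfolding is_distribution_def by (simp add: sum_distrib_left mult_ac)
qed

end

context game
begin

lemma conc_pi_le_sum_inverse:
  assumes \<mu>: "is_distribution UNIV \<mu>" and \<nu>: "\<And>s. \<nu> s > 0" and js: "is_joint_strategy N A \<pi>"
  shows "conc_pi N A K gam \<mu> \<nu> \<pi> \<le> (\<Sum>t\<in>UNIV. 1 / \<nu> t)"
proof -
  interpret discounted_stochastic "Pmat N A K \<pi>" gam by (rule discounted_stochastic_Pmat[OF js])
  have "((1 - gam) *\<^sub>R ((\<chi> t. \<mu> t) v* resolvent N A K gam \<pi>)) $ t / \<nu> t \<le> (\<Sum>t\<in>UNIV. 1 / \<nu> t)" for t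
  proof -
    have "(1 - gam) * (\<Sum>s\<in>UNIV. \<mu> s * R$s$t) / \<nu> t \<le> 1 / \<nu> t"
      using occupancy_le_one[OF \<mu>, of t] \<nu>[of t] by (simp add: divide_right_mono)
    also have "\<dots> \<le> (\<Sum>t\<in>UNIV. 1 / \<nu> t)" using \<nu> by (intro member_le_sum) (auto simp: less_imp_le)
    finally show ?thesis by (simp add: vector_matrix_mult_nth resolvent_eq_R[OF js])
  qed
  then show ?thesis unfolding conc_pi_def by (intro Max.boundedI) auto
qed

lemma occupancy_le_conc:
  assumes \<mu>: "is_distribution UNIV \<mu>" and \<nu>: "\<And>s. \<nu> s > 0" and js: "is_joint_strategy N A \<pi>"
  shows "(1 - gam) * (\<Sum>s\<in>UNIV. \<mu> s * resolvent N A K gam \<pi> $ s $ t) \<le> conc N A K gam \<mu> \<nu> * \<nu> t"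
proof -
  have "((1 - gam) *\<^sub>R ((\<chi> t. \<mu> t) v* resolvent N A K gam \<pi>)) $ t / \<nu> t \<le> conc_pi N A K gam \<mu> \<nu> \<pi>"
    unfolding conc_pi_def by (intro Max_ge) auto
  then have "(1 - gam) * (\<Sum>s\<in>UNIV. \<mu> s * resolvent N A K gam \<pi> $ s $ t) \<le> conc_pi N A K gam \<mu> \<nu> \<pi> * \<nu> t"
    using \<nu>[of t] by (simp add: vector_matrix_mult_nth divide_le_eq)
  also have "bdd_above ((\<lambda>\<pi>. conc_pi N A K gam \<mu> \<nu> \<pi>) ` {\<pi>. is_joint_strategy N A \<pi>})"
    using conc_pi_le_sum_inverse[OF \<mu> \<nu>] by (intro bdd_aboveI2) auto
  then have "conc_pi N A K gam \<mu> \<nu> \<pi> \<le> conc N A K gam \<mu> \<nu>"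
    unfolding conc_def using js by (intro cSUP_upper) auto
  then have "conc_pi N A K gam \<mu> \<nu> \<pi> * \<nu> t \<le> conc N A K gam \<mu> \<nu> * \<nu> t"
    using \<nu>[of t] by (intro mult_right_mono) auto
  finally show ?thesis .
qed

lemma conc_nonneg:
  assumes \<mu>: "is_distribution UNIV \<mu>" and \<nu>: "\<And>s. \<nu> s > 0" and js: "is_joint_strategy N A \<pi>"
  shows "0 \<le> conc N A K gam \<mu> \<nu>"
proof -
  interpret discounted_stochastic "Pmat N A K \<pi>" gam by (rule discounted_stochastic_Pmat[OF js])
  fix t
  have "0 \<le> (1 - gam) * (\<Sum>s\<in>UNIV. \<mu> s * R$s$t)"
    using \<mu> unfolding is_distribution_def by (intro occupancy_nonneg) auto
  also have "\<dots> \<le> conc N A K gam \<mu> \<nu> * \<nu> t"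
    using occupancy_le_conc[OF \<mu> \<nu> js] by (simp add: resolvent_eq_R[OF js])
  finally show ?thesis using \<nu>[of t] by (simp add: zero_le_mult_iff)
qed

lemma best_response_gap_wnorm_le:
  assumes i: "i \<in> {1..N}" and js: "is_joint_strategy N A \<pi>" and p: "p \<ge> 1"
    and \<mu>: "is_distribution UNIV \<mu>" and \<nu>: "\<And>s. \<nu> s > 0"
  shows "wnorm \<mu> p (\<lambda>s. best_value N A K r gam i \<pi> s - game_value N A K r gam i \<pi> s) powr p
    \<le> 2 powr (p - 1) * conc N A K gam \<mu> \<nu> / (1 - gam) powr p *
      (wnorm \<nu> p (\<lambda>s. bellman_opt N A K r gam i \<pi> v s - v s) powr p
       + wnorm \<nu> p (\<lambda>s. bellman N A K r gam i \<pi> v s - v s) powr p)"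
proof -
  interpret player N A K r gam i \<pi> using i js by unfold_locales
  have "\<And>s. 0 \<le> \<mu> s" using \<mu> by (simp add: is_distribution_def)
  then show ?thesis
    using best_response_gap_powr_integral_le[OF p _ occupancy_le_conc[OF \<mu> \<nu>]] p \<nu>
    by (simp add: wnorm_powr less_imp_le)
qed

end

theorem theorem1:
  fixes N :: nat
    and A :: "nat \<Rightarrow> 's::finite \<Rightarrow> 'a set"
    and K :: "'s \<Rightarrow> (nat \<Rightarrow> 'a) \<Rightarrow> 's \<Rightarrow> real"
    and r :: "nat \<Rightarrow> 's \<Rightarrow> (nat \<Rightarrow> 'a) \<Rightarrow> real"
    and gam p p' :: real
    and \<mu> \<nu> :: "'s \<Rightarrow> real"
    and \<rho> :: "nat \<Rightarrow> real"
    and \<pi> :: "nat \<Rightarrow> 's \<Rightarrow> 'a \<Rightarrow> real"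
    and v :: "nat \<Rightarrow> 's \<Rightarrow> real"
  assumes actions: "\<forall>i\<in>{1..N}. \<forall>s. finite (A i s) \<and> A i s \<noteq> {}"
    and kernel: "\<forall>s. \<forall>a\<in>joint_actions N A s. (\<forall>s'. 0 \<le> K s a s') \<and> (\<Sum>s'\<in>UNIV. K s a s') = 1"
    and gam: "0 \<le> gam" "gam < 1"
    and p: "p > 1" "p' > 1" "1 / p + 1 / p' = 1"
    and mu: "is_distribution UNIV \<mu>"
    and nu: "is_distribution UNIV \<nu>" "\<forall>s. \<nu> s > 0"
    and rho: "is_distribution {1..N} \<rho>"
    and pi: "is_joint_strategy N A \<pi>"
  shows "(\<Sum>i\<in>{1..N}. \<rho> i *
            wnorm \<mu> p (\<lambda>s. best_value N A K r gam i \<pi> s - game_value N A K r gam i \<pi> s) powr p) powr (1 / p)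
         \<le> 2 powr (1 / p') * conc N A K gam \<mu> \<nu> powr (1 / p) / (1 - gam) *
           (\<Sum>i\<in>{1..N}. \<rho> i *
              (wnorm \<nu> p (\<lambda>s. bellman_opt N A K r gam i \<pi> (v i) s - v i s) powr p
               + wnorm \<nu> p (\<lambda>s. bellman N A K r gam i \<pi> (v i) s - v i s) powr p)) powr (1 / p)"
proof -
  interpret game N A K r gam using actions kernel gam by unfold_locales
  have C: "0 \<le> conc N A K gam \<mu> \<nu>" using conc_nonneg[OF mu _ pi] nu by auto
  have root_constant: "(2 powr (p - 1) * conc N A K gam \<mu> \<nu> / (1 - gam) powr p) powr (1 / p)
      = 2 powr (1 / p') * conc N A K gam \<mu> \<nu> powr (1 / p) / (1 - gam)"
    using conjugate_exponent_constant[OF p(1,3) C] gam by simp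
  show ?thesis
    unfolding root_constant[symmetric]
    by (rule weighted_sum_powr_root_le)
      (use p rho C gam nu best_response_gap_wnorm_le[OF _ pi _ mu] in \<open>auto simp: is_distribution_def\<close>)
qed

end
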